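(* Let $k>2$, let $T_k$ be the theory of the countable universal homogeneous $k$-uniform hypergraph in $\mathcal{L}_k=\{R\}$ ($R$ $k$-ary), $\mathcal{U}$ a monster model of $T_k$ and $M\prec\mathcal{U}$ a countable elementary submodel. Suppose that $W$ is a Borel $k$-ary hypergraphon. Then $\mu_W$ is $M$-invariant, i.e. $\mu_W(\varphi(x,\bar a))=\mu_W(\varphi(x,\bar b))$ for every $\mathcal{L}_k$-formula $\varphi(x,\bar y)$ and all $\bar a\equiv_M\bar b$.
   Context: Local type spaces. For a finite set $I$ with $1\le|I|\le k-1$, $S^{\flat}_I$ is the space of complete $R$-types over $M$ in the variables $\{x_i:i\in I\}$: maximal consistent sets of formulas $R(\bar x_I,D)$, $\neg R(\bar x_I,D)$ with $D\subseteq M$, $|D|=k-|I|$ (independent of the order of variables; the same applies to any set of named variables). $\lambda_I$ is the Borel probability measure on $S^{\flat}_I$ such that for distinct $D_1,\dots,D_{n+m}\subseteq M$ of size $k-|I|$ the set of types containing $R(\bar x_I,D_l)$ for $l\le n$ and $\neg R(\bar x_I,D_l)$ for $n<l\le n+m$ has measure $2^{-(n+m)}$. For $D\subseteq\mathcal{U}$ with $1\le|D|\le k-1$, $\operatorname{tp}^{\flat}(D)=\{R(\bar x,E):E\subseteq M,|E|=k-|D|,\mathcal{U}\models R(D,E)\}\cup\{\neg R(\bar x,E):\mathcal{U}\models\neg R(D,E)\}$. Hypergraphons. $\mathfrak{m}$ is Lebesgue measure. A $k$-ary hypergraphon is a measurable $W\colon\prod_{I\subseteq[k],1\le|I|\le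 k-1}[0,1]\to[0,1]$ invariant under the action of $\mathrm{Sym}(k)$ permuting the index sets; Borel if Borel measurable. Fix for each $1\le j\le k-1$ a measure isomorphism between $(S^{\flat}_{[j]},\lambda_{[j]})$ and $([0,1],\mathfrak{m})$, transported to every $S^{\flat}_I$ with $|I|=j$; via these, $W$ is regarded as a function on $\prod_{I}S^{\flat}_I$. The measure $\mu_W$. For finite $B\subseteq M$ and $C\subseteq\mathcal{U}\setminus M$, a complete formula over $BC$ is $\Xi(x,B,C)=\bigwedge R^{\epsilon(B_0,C_0)}(x,B_0,C_0)$ over all $B_0\subseteq B$, $C_0\subseteq C$ with $|B_0|+|C_0|=k-1$, $\epsilon(B_0,C_0)\in\{1,-1\}$, $R^1=R$, $R^{-1}=\neg R$; $\Xi_B$ is the subconjunction with $C_0=\emptyset$. Let $\mathbb{S}_C=\prod_{C_0\subseteq C,1\le|C_0|\le k-2}S^{\flat}_{\{x\}\cup\bar z_{C_0}}$ with fresh variables $\bar z_{C_0}$; $\bar q=(q_{C_0})$; $\bar\lambda$ the product of the $\lambda$-measures on $S^{\flat}_{\{x\}}\times\mathbb{S}_C$. For $C_0=\{c_1,\dots,c_{k-1}\}\subseteq C$, $(p,\mathring{\mathbf{q}}_{[C_0]})$ is the argument of $W$ obtained by identifying $[k]$ with $\{x,c_1,\dots,c_{k-1}\}$, assigning to $\{x\}$ the type $p$, to nonempty $D\subseteq C_0$ the type $\operatorname{tp}^{\flat}(D)$, and to $\{x\}\cup D$ ($\emptyset\ne D\subsetneq C_0$) the type $q_D$. With $W^1=W$,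 $W^{-1}=1-W$: $\mu_W(\Xi)=\int_{p\in S^{\flat}_{\{x\}}}\int_{\bar q\in\mathbb{S}_C}\mathbf{1}_{\Xi_B}(p)\prod_{C_0\subseteq C,1\le|C_0|\le k-2}\prod_{B_0\subseteq B,|B_0|=k-1-|C_0|}\mathbf{1}[R^{\epsilon(B_0,C_0)}(x,B_0,\bar z_{C_0})\in q_{C_0}]\prod_{C_0\subseteq C,|C_0|=k-1}W^{\epsilon(\emptyset,C_0)}(p,\mathring{\mathbf{q}}_{[C_0]})\,d\bar\lambda$. Finite sets get measure $0$ and $\mu_W$ is extended additively to all formulas (every definable set in $x$ differs by a finite set from a finite disjoint union of complete formulas); this gives a Keisler measure (finitely additive probability measure on formulas) on $\mathcal{L}_x(\mathcal{U})$. *)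

theory Defs
  imports "HOL-Probability.Probability"
begin

datatype fm = FEq nat nat | FRel "nat list" | FNeg fm | FConj fm fm | FEx nat fm

text \<open>Satisfaction in a k-uniform hypergraph with vertex set D and edge set G
  (a set of k-element subsets of D); R(v1..vk) holds iff the vi are distinct
  and form an edge. Quantifiers range over D.\<close>
fun sat :: "'a set \<Rightarrow> 'a set set \<Rightarrow> (nat \<Rightarrow> 'a) \<Rightarrow> fm \<Rightarrow> bool" where
  "sat D G v (FEq i j) = (v i = v j)"
| "sat D G v (FRel is) = (distinct (map v is) \<and> set (map v is) \<in> G)"
| "sat D G v (FNeg \<phi>) = (\<not> sat D G v \<phi>)"
| "sat D G v (FConj \<phi> \<psi>) = (sat D G v \<phi> \<and> sat D G v \<psi>)"
| "sat D G v (FEx i \<phi>) = (\<exists>a\<in>D. sat D G (v(i := a)) \<phi>)"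

fun fv :: "fm \<Rightarrow> nat set" where
  "fv (FEq i j) = {i, j}"
| "fv (FRel is) = set is"
| "fv (FNeg \<phi>) = fv \<phi>"
| "fv (FConj \<phi> \<psi>) = fv \<phi> \<union> fv \<psi>"
| "fv (FEx i \<phi>) = fv \<phi> - {i}"

fun wf :: "nat \<Rightarrow> fm \<Rightarrow> bool" where
  "wf k (FEq i j) = True"
| "wf k (FRel is) = (length is = k)"
| "wf k (FNeg \<phi>) = wf k \<phi>"
| "wf k (FConj \<phi> \<psi>) = (wf k \<phi> \<and> wf k \<psi>)"
| "wf k (FEx i \<phi>) = wf k \<phi>"

definition ksub :: "'a set \<Rightarrow> nat \<Rightarrow> 'a set set" where
  "ksub A n = {S. S \<subseteq> A \<and> finite S \<and> card S = n}"

definition univ_homog :: "nat \<Rightarrow> nat set set \<Rightarrow> bool" where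
  "univ_homog k H \<longleftrightarrow>
     H \<subseteq> ksub (UNIV :: nat set) k
   \<and> (\<forall>(V :: nat set) (G :: nat set set). G \<subseteq> ksub V k \<longrightarrow>
        (\<exists>e. inj_on e V \<and> (\<forall>S\<in>ksub V k. S \<in> G \<longleftrightarrow> e ` S \<in> H)))
   \<and> (\<forall>A B h. finite A \<and> finite B \<and> bij_betw h A B
        \<and> (\<forall>S\<in>ksub A k. S \<in> H \<longleftrightarrow> h ` S \<in> H) \<longrightarrow>
        (\<exists>\<sigma>. bij \<sigma> \<and> (\<forall>S. S \<in> H \<longleftrightarrow> \<sigma> ` S \<in> H) \<and> (\<forall>a\<in>A. \<sigma> a = h a)))"

text \<open>(U, Es) is a model of T_k = Th(H) for the countable universal homogeneous
  k-uniform hypergraph H.\<close>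
definition model_Tk :: "nat \<Rightarrow> 'u set \<Rightarrow> 'u set set \<Rightarrow> bool" where
  "model_Tk k U Es \<longleftrightarrow> Es \<subseteq> ksub U k \<and>
     (\<exists>H. univ_homog k H \<and>
        (\<forall>\<phi>. wf k \<phi> \<and> fv \<phi> = {} \<longrightarrow>
           (sat (UNIV :: nat set) H (\<lambda>_. 0) \<phi> \<longleftrightarrow> sat U Es (\<lambda>_. undefined) \<phi>)))"

definition aleph1_saturated :: "nat \<Rightarrow> 'u set \<Rightarrow> 'u set set \<Rightarrow> bool" where
  "aleph1_saturated k U Es \<longleftrightarrow>
     (\<forall>A \<Phi>. A \<subseteq> U \<and> countable A
        \<and> (\<forall>(\<phi>, v)\<in>\<Phi>. wf k \<phi> \<and> (\<forall>i\<in>fv \<phi> - {0}. v i \<in> A))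
        \<and> (\<forall>F\<subseteq>\<Phi>. finite F \<longrightarrow> (\<exists>a\<in>U. \<forall>(\<phi>, v)\<in>F. sat U Es (v(0 := a)) \<phi>))
        \<longrightarrow> (\<exists>a\<in>U. \<forall>(\<phi>, v)\<in>\<Phi>. sat U Es (v(0 := a)) \<phi>))"

definition elem_sub :: "nat \<Rightarrow> 'u set \<Rightarrow> 'u set set \<Rightarrow> 'u set \<Rightarrow> bool" where
  "elem_sub k U Es M \<longleftrightarrow> M \<subseteq> U \<and>
     (\<forall>\<phi> v. wf k \<phi> \<and> (\<forall>i\<in>fv \<phi>. v i \<in> M) \<longrightarrow> (sat M Es v \<phi> \<longleftrightarrow> sat U Es v \<phi>))"

definition override :: "'u list \<Rightarrow> (nat \<Rightarrow> 'u) \<Rightarrow> nat \<Rightarrow> 'u" where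
  "override a v i = (if i < length a then a ! i else v i)"

definition same_type :: "nat \<Rightarrow> 'u set \<Rightarrow> 'u set set \<Rightarrow> 'u set \<Rightarrow> 'u list \<Rightarrow> 'u list \<Rightarrow> bool" where
  "same_type k U Es M a b \<longleftrightarrow> length a = length b \<and>
     (\<forall>\<phi> v. wf k \<phi> \<and> (\<forall>i\<in>fv \<phi>. length a \<le> i \<longrightarrow> v i \<in> M) \<longrightarrow>
        (sat U Es (override a v) \<phi> \<longleftrightarrow> sat U Es (override b v) \<phi>))"

text \<open>A complete R-type over M in j (named) variables is identified with its truth
  assignment on the (k-j)-subsets D of M: t D = True iff R(x,D) is in the type.
  Every such assignment is consistent; lambda_j is the product of fair coin
  measures, which is exactly the measure determined by the cylinder condition.\<close>
definition lam :: "'u set \<Rightarrow> nat \<Rightarrow> nat \<Rightarrow> ('u set \<Rightarrow> bool) measure" where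
  "lam M k j = PiM (ksub M (k - j)) (\<lambda>_. measure_pmf (bernoulli_pmf (1/2)))"

definition unitI :: "real measure" where
  "unitI = restrict_space lborel {0..1}"

definition meas_iso :: "'a measure \<Rightarrow> 'b measure \<Rightarrow> ('a \<Rightarrow> 'b) \<Rightarrow> ('b \<Rightarrow> 'a) \<Rightarrow> bool" where
  "meas_iso A B f g \<longleftrightarrow> f \<in> measurable A B \<and> distr A B f = B
     \<and> g \<in> measurable B A \<and> distr B A g = A
     \<and> (AE x in A. g (f x) = x) \<and> (AE y in B. f (g y) = y)"

definition tpf :: "nat \<Rightarrow> 'u set \<Rightarrow> 'u set set \<Rightarrow> 'u set \<Rightarrow> ('u set \<Rightarrow> bool)" where
  "tpf k M Es D = restrict (\<lambda>E. D \<union> E \<in> Es) (ksub M (k - card D))"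

definition hg_index :: "nat \<Rightarrow> nat set set" where
  "hg_index k = {I. I \<subseteq> {1..k} \<and> 1 \<le> card I \<and> card I \<le> k - 1}"

definition hg_space :: "nat \<Rightarrow> (nat set \<Rightarrow> real) measure" where
  "hg_space k = PiM (hg_index k) (\<lambda>_. unitI)"

definition borel_hypergraphon :: "nat \<Rightarrow> ((nat set \<Rightarrow> real) \<Rightarrow> real) \<Rightarrow> bool" where
  "borel_hypergraphon k W \<longleftrightarrow> W \<in> borel_measurable (hg_space k)
     \<and> (\<forall>y\<in>space (hg_space k). 0 \<le> W y \<and> W y \<le> 1)
     \<and> (\<forall>\<sigma> y. \<sigma> permutes {1..k} \<and> y \<in> space (hg_space k) \<longrightarrow> W (\<lambda>I. y (\<sigma> ` I)) = W y)"

definition Wsgn :: "bool \<Rightarrow> real \<Rightarrow> real" where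
  "Wsgn e r = (if e then r else 1 - r)"

text \<open>The argument (p, q_[C0]) of W: [k] is identified with {x} \<union> C0, with
  1 corresponding to x and {2..k} to C0 via a fixed bijection.\<close>
definition Warg :: "nat \<Rightarrow> 'u set \<Rightarrow> 'u set set \<Rightarrow> (nat \<Rightarrow> ('u set \<Rightarrow> bool) \<Rightarrow> real)
     \<Rightarrow> 'u set \<Rightarrow> ('u set \<Rightarrow> bool) \<Rightarrow> ('u set \<Rightarrow> 'u set \<Rightarrow> bool) \<Rightarrow> nat set \<Rightarrow> real" where
  "Warg k M Es f C0 p q = restrict (\<lambda>I.
      let \<beta> = (SOME \<beta>. bij_betw \<beta> {2..k} C0); D = \<beta> ` (I - {1}) in
      if 1 \<in> I then (if D = {} then f 1 p else f (card I) (q D))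
      else f (card I) (tpf k M Es D)) (hg_index k)"

definition qidx :: "nat \<Rightarrow> 'u set \<Rightarrow> 'u set set" where
  "qidx k C = {C0. C0 \<subseteq> C \<and> 1 \<le> card C0 \<and> card C0 \<le> k - 2}"

text \<open>mu_W of the complete formula Xi(x,B,C) given by the sign function eps on
  the (k-1)-subsets of B \<union> C.\<close>
definition mu_cf :: "nat \<Rightarrow> 'u set \<Rightarrow> 'u set set \<Rightarrow> (nat \<Rightarrow> ('u set \<Rightarrow> bool) \<Rightarrow> real)
     \<Rightarrow> ((nat set \<Rightarrow> real) \<Rightarrow> real) \<Rightarrow> 'u set \<Rightarrow> 'u set \<Rightarrow> ('u set \<Rightarrow> bool) \<Rightarrow> real" where
  "mu_cf k M Es f W B C eps =
     (LINT p|lam M k 1. LINT q|PiM (qidx k C) (\<lambda>C0. lam M k (1 + card C0)).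
        (if (\<forall>B0\<in>ksub B (k - 1). p B0 = eps B0) then 1 else 0)
      * (\<Prod>C0\<in>qidx k C. \<Prod>B0\<in>ksub B (k - 1 - card C0).
            if q C0 B0 = eps (B0 \<union> C0) then 1 else 0)
      * (\<Prod>C0\<in>ksub C (k - 1). Wsgn (eps C0) (W (Warg k M Es f C0 p q))))"

definition Xi_set :: "nat \<Rightarrow> 'u set \<Rightarrow> 'u set set \<Rightarrow> 'u set \<Rightarrow> ('u set \<Rightarrow> bool) \<Rightarrow> 'u set" where
  "Xi_set k U Es A eps = {x\<in>U. \<forall>S\<in>ksub A (k - 1). (insert x S \<in> Es) = eps S}"

definition inst :: "'u \<Rightarrow> 'u list \<Rightarrow> nat \<Rightarrow> 'u" where
  "inst x a i = (if i = 0 then x else if i \<le> length a then a ! (i - 1) else undefined)"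

text \<open>mu_W(phi(x,a)): with B = params in M, C = params outside M, phi(x,a) differs
  by a finite set from the disjoint union of the complete formulas over BC that
  it contains up to a finite set; mu_W is the sum of their measures.\<close>
definition muW :: "nat \<Rightarrow> 'u set \<Rightarrow> 'u set set \<Rightarrow> 'u set \<Rightarrow> (nat \<Rightarrow> ('u set \<Rightarrow> bool) \<Rightarrow> real)
     \<Rightarrow> ((nat set \<Rightarrow> real) \<Rightarrow> real) \<Rightarrow> fm \<Rightarrow> 'u list \<Rightarrow> real" where
  "muW k U Es M f W \<phi> a =
     (let B = set a \<inter> M; C = set a - M; X = {x\<in>U. sat U Es (inst x a) \<phi>} in
      \<Sum>eps\<in>PiE (ksub (B \<union> C) (k - 1)) (\<lambda>_. UNIV).
        if finite (Xi_set k U Es (B \<union> C) eps - X) then mu_cf k M Es f W B C eps else 0)"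

end

(*
  Write a = (B, C) with B the parameters in M and C those outside M. The summand of mu_W(phi(x, a))
  belonging to a sign pattern eps is decided by two things: whether Xi_eps(x, a) and not phi(x, a) has
  finitely many solutions, and the integral mu_W(Xi_eps), which sees a only through eps and through
  the R-types over M of the subsets of C. If a and b have the same type over M, then b_i |-> a_i is a
  well-defined bijection fixing M that transports sign patterns. Finiteness of a definable set is
  the failure of one of the first-order statements "there are at least n solutions", hence it is
  the same for a and b; the R-types over M of the subsets of C agree; relabelling C merely
  reindexes the product measure on the q's; and the different identifications of [k] with
  {x} u C0 are absorbed by the Sym(k)-invariance of W.
*)

theory Submission
  imports Defs
begin

section \<open>Operations on formulas\<close>

fun rename_fm :: "(nat \<Rightarrow> nat) \<Rightarrow> fm \<Rightarrow> fm" where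
  "rename_fm r (FEq i j) = FEq (r i) (r j)"
| "rename_fm r (FRel is) = FRel (map r is)"
| "rename_fm r (FNeg \<phi>) = FNeg (rename_fm r \<phi>)"
| "rename_fm r (FConj \<phi> \<psi>) = FConj (rename_fm r \<phi>) (rename_fm r \<psi>)"
| "rename_fm r (FEx i \<phi>) = FEx (r i) (rename_fm r \<phi>)"

lemma sat_rename_fm: "inj r \<Longrightarrow> sat D G v (rename_fm r \<phi>) \<longleftrightarrow> sat D G (v \<circ> r) \<phi>"
proof (induction \<phi> arbitrary: v)
  case (FEx i \<phi>)
  have "(v(r i := y)) \<circ> r = (v \<circ> r)(i := y)" for y
    using FEx.prems by (auto simp: fun_eq_iff inj_eq)
  then show ?case
    using FEx.IH[OF FEx.prems] by (simp only: rename_fm.simps sat.simps)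
qed (auto simp: comp_def)

lemma fv_rename_fm: "inj r \<Longrightarrow> fv (rename_fm r \<phi>) = r ` fv \<phi>"
  by (induction \<phi>) (auto simp: inj_eq image_Un)

lemma wf_rename_fm [simp]: "wf k (rename_fm r \<phi>) = wf k \<phi>"
  by (induction \<phi>) auto

lemma sat_cong_fv: "\<forall>i\<in>fv \<phi>. v i = w i \<Longrightarrow> sat D G v \<phi> \<longleftrightarrow> sat D G w \<phi>"
proof (induction \<phi> arbitrary: v w)
  case (FRel "is")
  then have "map v is = map w is"
    by auto
  then show ?case
    by (simp only: sat.simps)
next
  case (FConj \<phi> \<psi>)
  have "sat D G v \<phi> \<longleftrightarrow> sat D G w \<phi>" "sat D G v \<psi> \<longleftrightarrow> sat D G w \<psi>"
    using FConj.prems by (intro FConj.IH; auto)+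
  then show ?case
    by simp
next
  case (FEx i \<phi>)
  have "sat D G (v(i := y)) \<phi> \<longleftrightarrow> sat D G (w(i := y)) \<phi>" for y
    using FEx.prems by (intro FEx.IH) auto
  then show ?case
    by simp
qed auto

definition FTrue :: fm where
  "FTrue = FNeg (FEx 0 (FNeg (FEq 0 0)))"

fun conjs :: "fm list \<Rightarrow> fm" where
  "conjs [] = FTrue"
| "conjs (\<phi> # \<phi>s) = FConj \<phi> (conjs \<phi>s)"

lemma sat_conjs [simp]: "sat D G v (conjs \<phi>s) \<longleftrightarrow> (\<forall>\<phi>\<in>set \<phi>s. sat D G v \<phi>)"
  by (induction \<phi>s) (auto simp: FTrue_def)

lemma fv_conjs [simp]: "fv (conjs \<phi>s) = (\<Union>\<phi>\<in>set \<phi>s. fv \<phi>)"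
  by (induction \<phi>s) (auto simp: FTrue_def)

lemma wf_conjs [simp]: "wf k (conjs \<phi>s) \<longleftrightarrow> (\<forall>\<phi>\<in>set \<phi>s. wf k \<phi>)"
  by (induction \<phi>s) (auto simp: FTrue_def)

definition block_upd :: "nat \<Rightarrow> 'a list \<Rightarrow> (nat \<Rightarrow> 'a) \<Rightarrow> nat \<Rightarrow> 'a" where
  "block_upd m ys v i = (if m \<le> i \<and> i < m + length ys then ys ! (i - m) else v i)"

lemma block_upd_Cons: "block_upd (Suc m) ys (v(m := y)) = block_upd m (y # ys) v"
  by (auto simp: block_upd_def fun_eq_iff nth_Cons' not_less_eq_eq)

fun ex_block :: "nat \<Rightarrow> nat \<Rightarrow> fm \<Rightarrow> fm" where
  "ex_block m 0 \<phi> = \<phi>"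
| "ex_block m (Suc n) \<phi> = FEx m (ex_block (Suc m) n \<phi>)"

lemma fv_ex_block [simp]: "fv (ex_block m n \<phi>) = fv \<phi> - {m..<m + n}"
  by (induction n arbitrary: m) auto

lemma wf_ex_block [simp]: "wf k (ex_block m n \<phi>) = wf k \<phi>"
  by (induction n arbitrary: m) auto

lemma sat_ex_block:
  "sat D G v (ex_block m n \<phi>) \<longleftrightarrow> (\<exists>ys. length ys = n \<and> set ys \<subseteq> D \<and> sat D G (block_upd m ys v) \<phi>)"
proof (induction n arbitrary: m v)
  case 0
  have "block_upd m [] v = v"
    by (rule ext) (auto simp: block_upd_def)
  then show ?case
    by simp
next
  case (Suc n)
  have "sat D G v (ex_block m (Suc n) \<phi>) \<longleftrightarrow>
      (\<exists>y\<in>D. \<exists>ys. length ys = n \<and> set ys \<subseteq> D \<and> sat D G (block_upd m (y # ys) v) \<phi>)"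
    by (simp only: ex_block.simps sat.simps Suc.IH block_upd_Cons)
  also have "\<dots> \<longleftrightarrow> (\<exists>ys. length ys = Suc n \<and> set ys \<subseteq> D \<and> sat D G (block_upd m ys v) \<phi>)"
  proof
    assume "\<exists>ys. length ys = Suc n \<and> set ys \<subseteq> D \<and> sat D G (block_upd m ys v) \<phi>"
    then obtain zs where zs: "length zs = Suc n" "set zs \<subseteq> D" "sat D G (block_upd m zs v) \<phi>"
      by blast
    then obtain y ys where "zs = y # ys"
      by (cases zs) auto
    with zs show "\<exists>y\<in>D. \<exists>ys. length ys = n \<and> set ys \<subseteq> D \<and> sat D G (block_upd m (y # ys) v) \<phi>"
      by (intro bexI[of _ y] exI[of _ ys]) auto
  next
    assume "\<exists>y\<in>D. \<exists>ys. length ys = n \<and> set ys \<subseteq> D \<and> sat D G (block_upd m (y # ys) v) \<phi>"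
    then obtain y ys where "y \<in> D" "length ys = n" "set ys \<subseteq> D" "sat D G (block_upd m (y # ys) v) \<phi>"
      by blast
    then show "\<exists>ys. length ys = Suc n \<and> set ys \<subseteq> D \<and> sat D G (block_upd m ys v) \<phi>"
      by (intro exI[of _ "y # ys"]) auto
  qed
  finally show ?case .
qed

text \<open>The witnesses for the variable \<open>L\<close> are kept in \<open>L + 1, \<dots>, L + n\<close>, which must not occur in \<open>\<psi>\<close>.\<close>
definition at_least :: "nat \<Rightarrow> nat \<Rightarrow> fm \<Rightarrow> fm" where
  "at_least L n \<psi> = ex_block (Suc L) n (FConj
     (conjs (map (\<lambda>j. rename_fm (Transposition.transpose L (Suc L + j)) \<psi>) [0..<n]))
     (conjs [FNeg (FEq (Suc L + i) (Suc L + j)). i \<leftarrow> [0..<n], j \<leftarrow> [0..<n], i \<noteq> j]))"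

lemma wf_at_least: "wf k \<psi> \<Longrightarrow> wf k (at_least L n \<psi>)"
  by (auto simp: at_least_def)

lemma fv_at_least:
  assumes "fv \<psi> \<subseteq> {0..L}"
  shows "fv (at_least L n \<psi>) \<subseteq> {0..<L}"
  using assms by (auto simp: at_least_def fv_rename_fm inj_transpose Transposition.transpose_def)

lemma sat_at_least:
  assumes "fv \<psi> \<subseteq> {0..L}"
  shows "sat D G v (at_least L n \<psi>) \<longleftrightarrow>
    (\<exists>ys. length ys = n \<and> distinct ys \<and> set ys \<subseteq> D \<and> (\<forall>y\<in>set ys. sat D G (v(L := y)) \<psi>))"
  unfolding at_least_def sat_ex_block
proof (intro ex_cong1)
  fix ys :: "'a list"
  let ?w = "block_upd (Suc L) ys v"
  have witnesses: "sat D G ?w (conjs (map (\<lambda>j. rename_fm (Transposition.transpose L (Suc L + j)) \<psi>) [0..<n]))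
      \<longleftrightarrow> (\<forall>y\<in>set ys. sat D G (v(L := y)) \<psi>)" if "length ys = n"
  proof -
    have "sat D G ?w (rename_fm (Transposition.transpose L (Suc L + j)) \<psi>)
        \<longleftrightarrow> sat D G (v(L := ys ! j)) \<psi>" if "j < n" for j
      unfolding sat_rename_fm[OF inj_transpose] using assms that \<open>length ys = n\<close>
      by (intro sat_cong_fv) (auto simp: block_upd_def Transposition.transpose_def)
    then show ?thesis
      using that by (auto simp: all_set_conv_all_nth)
  qed
  have distinct: "sat D G ?w (conjs [FNeg (FEq (Suc L + i) (Suc L + j)). i \<leftarrow> [0..<n], j \<leftarrow> [0..<n], i \<noteq> j])
      \<longleftrightarrow> distinct ys" if "length ys = n"
  proof -
    have "sat D G ?w (conjs [FNeg (FEq (Suc L + i) (Suc L + j)). i \<leftarrow> [0..<n], j \<leftarrow> [0..<n], i \<noteq> j])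
        \<longleftrightarrow> (\<forall>i<n. \<forall>j<n. i \<noteq> j \<longrightarrow> ?w (Suc L + i) \<noteq> ?w (Suc L + j))"
      by auto
    also have "\<dots> \<longleftrightarrow> distinct ys"
      using that by (auto simp: block_upd_def distinct_conv_nth)
    finally show ?thesis .
  qed
  show "(length ys = n \<and> set ys \<subseteq> D \<and> sat D G ?w (FConj
       (conjs (map (\<lambda>j. rename_fm (Transposition.transpose L (Suc L + j)) \<psi>) [0..<n]))
       (conjs [FNeg (FEq (Suc L + i) (Suc L + j)). i \<leftarrow> [0..<n], j \<leftarrow> [0..<n], i \<noteq> j])))
    \<longleftrightarrow> (length ys = n \<and> distinct ys \<and> set ys \<subseteq> D \<and> (\<forall>y\<in>set ys. sat D G (v(L := y)) \<psi>))"
  proof (cases "length ys = n")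
    case True
    show ?thesis
      unfolding sat.simps witnesses[OF True] distinct[OF True] by blast
  next
    case False
    then show ?thesis
      by blast
  qed
qed

section \<open>Tuples of the same type over \<open>M\<close>\<close>

lemma same_type_sym: "same_type k U Es M a b \<Longrightarrow> same_type k U Es M b a"
  unfolding same_type_def by auto

lemma same_type_length: "same_type k U Es M a b \<Longrightarrow> length b = length a"
  by (simp add: same_type_def)

lemma same_type_sat_params:
  assumes "same_type k U Es M a b" "wf k \<phi>" "\<And>i. i \<in> fv \<phi> \<Longrightarrow> length a \<le> i \<Longrightarrow> v i \<in> M"
  shows "sat U Es (override a v) \<phi> \<longleftrightarrow> sat U Es (override b v) \<phi>"
  using assms unfolding same_type_def by blast

lemma same_type_sat:
  assumes "same_type k U Es M a b" "wf k \<phi>" "fv \<phi> \<subseteq> {0..<length a}"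
  shows "sat U Es (override a v) \<phi> \<longleftrightarrow> sat U Es (override b v) \<phi>"
  using assms by (intro same_type_sat_params) auto

lemma same_type_nth_eq_iff:
  assumes "same_type k U Es M a b" "i < length a" "j < length a"
  shows "a ! i = a ! j \<longleftrightarrow> b ! i = b ! j"
  using same_type_sat[OF assms(1), of "FEq i j"] assms same_type_length[OF assms(1)]
  by (simp add: override_def)

lemma same_type_nth_in_M:
  assumes "same_type k U Es M a b" "i < length a" "a ! i \<in> M"
  shows "b ! i = a ! i"
proof -
  let ?v = "\<lambda>_. a ! i"
  have "sat U Es (override a ?v) (FEq i (length a)) \<longleftrightarrow> sat U Es (override b ?v) (FEq i (length a))"
    using assms by (intro same_type_sat_params) auto
  then show ?thesis
    using assms same_type_length[OF assms(1)] by (simp add: override_def)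
qed

lemma same_type_distinct_map:
  assumes "same_type k U Es M a b" "set is \<subseteq> {..<length a}"
  shows "distinct (map ((!) b) is) \<longleftrightarrow> distinct (map ((!) a) is)"
proof -
  have "b ! (is ! i) = b ! (is ! j) \<longleftrightarrow> a ! (is ! i) = a ! (is ! j)" if "i < length is" "j < length is" for i j
    using same_type_nth_eq_iff[OF assms(1)] assms(2) that by (metis lessThan_iff nth_mem subsetD)
  then show ?thesis
    unfolding distinct_conv_nth by simp
qed

lemma map_override: "set is \<subseteq> {..<length a} \<Longrightarrow> map (override a v) is = map ((!) a) is"
  by (auto simp: override_def)

lemma same_type_edge_iff:
  assumes st: "same_type k U Es M a b" and "set is \<subseteq> {..<length a}" "set es \<subseteq> M"
    and "length is + length es = k"
  shows "distinct (map ((!) a) is @ es) \<and> set (map ((!) a) is @ es) \<in> Es \<longleftrightarrow>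
         distinct (map ((!) b) is @ es) \<and> set (map ((!) b) is @ es) \<in> Es"
proof -
  let ?L = "length a"
  let ?v = "\<lambda>i. es ! (i - ?L)"
  let ?vars = "is @ [?L..<?L + length es]"
  have "map (override c ?v) ?vars = map ((!) c) is @ es" if "length c = ?L" for c
  proof -
    have "map (override c ?v) [?L..<?L + length es] = map ?v [?L..<?L + length es]"
      using that by (auto simp: override_def)
    also have "\<dots> = es"
      by (rule nth_equalityI) auto
    finally show ?thesis
      using assms(2) that by (simp add: map_override)
  qed
  moreover have "sat U Es (override a ?v) (FRel ?vars) \<longleftrightarrow> sat U Es (override b ?v) (FRel ?vars)"
    using assms by (intro same_type_sat_params) auto
  ultimately show ?thesis
    using same_type_length[OF st] by (simp only: sat.simps)
qed

lemma nth_pattern_bij: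
  assumes L: "length b = length a"
    and eq: "\<And>i j. i < length a \<Longrightarrow> j < length a \<Longrightarrow> a ! i = a ! j \<longleftrightarrow> b ! i = b ! j"
  obtains g where "bij_betw g (set b) (set a)" "\<And>i. i < length a \<Longrightarrow> g (b ! i) = a ! i"
proof
  define g where "g y = a ! (SOME i. i < length a \<and> b ! i = y)" for y
  show g_nth: "g (b ! i) = a ! i" if "i < length a" for i
  proof -
    have "\<exists>j. j < length a \<and> b ! j = b ! i"
      using that by auto
    then have "(SOME j. j < length a \<and> b ! j = b ! i) < length a \<and> b ! (SOME j. j < length a \<and> b ! j = b ! i) = b ! i"
      by (rule someI_ex)
    then show ?thesis
      unfolding g_def using eq that by blast
  qed
  have "inj_on g (set b)"
  proof (rule inj_onI)
    fix x y assume "x \<in> set b" "y \<in> set b" "g x = g y"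
    then obtain i j where "i < length a" "j < length a" "x = b ! i" "y = b ! j"
      using L by (auto simp: in_set_conv_nth)
    then show "x = y"
      using \<open>g x = g y\<close> eq g_nth by metis
  qed
  moreover have "g ` set b = set a"
  proof (intro equalityI subsetI)
    fix x assume "x \<in> g ` set b"
    then obtain i where "i < length a" "x = g (b ! i)"
      using L by (auto simp: in_set_conv_nth)
    then show "x \<in> set a"
      using g_nth by simp
  next
    fix x assume "x \<in> set a"
    then obtain i where "i < length a" "x = a ! i"
      by (auto simp: in_set_conv_nth)
    then show "x \<in> g ` set b"
      using L g_nth by (metis image_eqI nth_mem)
  qed
  ultimately show "bij_betw g (set b) (set a)"
    by (simp add: bij_betw_def)
qed

lemma same_type_relabel:
  assumes st: "same_type k U Es M a b"
  obtains g where "bij_betw g (set b) (set a)" "\<And>i. i < length a \<Longrightarrow> g (b ! i) = a ! i"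
    "\<And>y. y \<in> set b \<inter> M \<Longrightarrow> g y = y" "bij_betw g (set b - M) (set a - M)"
    "set b \<inter> M = set a \<inter> M"
proof -
  have L: "length b = length a"
    using st by (rule same_type_length)
  obtain g where bij: "bij_betw g (set b) (set a)" and g: "\<And>i. i < length a \<Longrightarrow> g (b ! i) = a ! i"
    using nth_pattern_bij[OF L same_type_nth_eq_iff[OF st]] by blast
  have in_M: "a ! i \<in> M \<longleftrightarrow> b ! i \<in> M" and fix_M: "b ! i \<in> M \<Longrightarrow> a ! i = b ! i"
    if "i < length a" for i
    using same_type_nth_in_M[OF st that] same_type_nth_in_M[OF same_type_sym[OF st]] that L by metis+
  have g_M: "g y = y" if y: "y \<in> set b \<inter> M" for y
  proof -
    obtain i where "i < length a" "y = b ! i" "b ! i \<in> M"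
      using y L by (auto simp: in_set_conv_nth)
    then show ?thesis
      using g fix_M by simp
  qed
  have "g ` (set b - M) = set a - M"
  proof (intro equalityI subsetI)
    fix x assume "x \<in> g ` (set b - M)"
    then obtain i where "i < length a" "x = g (b ! i)" "b ! i \<notin> M"
      using L by (auto simp: in_set_conv_nth)
    then show "x \<in> set a - M"
      using g in_M by simp
  next
    fix x assume "x \<in> set a - M"
    then obtain i where "i < length a" "x = a ! i" "b ! i \<notin> M"
      using in_M by (auto simp: in_set_conv_nth)
    then show "x \<in> g ` (set b - M)"
      using g L by (auto intro!: image_eqI[of _ g "b ! i"])
  qed
  then have "bij_betw g (set b - M) (set a - M)"
    using bij by (auto simp: bij_betw_def intro: inj_on_subset)
  moreover have "set b \<inter> M = set a \<inter> M"
    using L in_M fix_M by (auto simp: in_set_conv_nth) (metis nth_mem)+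
  ultimately show thesis
    using that bij g g_M by blast
qed

lemma obtain_indices:
  assumes "finite S" "S \<subseteq> set a"
  obtains "is" where "set is \<subseteq> {..<length a}" "distinct (map ((!) a) is)" "set (map ((!) a) is) = S"
proof -
  obtain xs where xs: "set xs = S" "distinct xs"
    using finite_distinct_list[OF assms(1)] by blast
  define idx where "idx s = (SOME i. i < length a \<and> a ! i = s)" for s
  have idx: "idx s < length a \<and> a ! idx s = s" if "s \<in> set a" for s
    unfolding idx_def by (rule someI_ex) (use that in \<open>auto simp: in_set_conv_nth\<close>)
  have "map ((!) a) (map idx xs) = xs"
    unfolding map_map by (rule map_idI) (use idx xs assms(2) in auto)
  moreover have "set (map idx xs) \<subseteq> {..<length a}"
    using idx xs assms(2) by auto
  ultimately show thesis
    using that xs by metis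
qed

lemma set_in_edges_imp_distinct:
  assumes "Es \<subseteq> ksub U k" "length xs = k" "set xs \<in> Es"
  shows "distinct xs"
  using assms card_distinct[of xs] by (auto simp: ksub_def)

lemma same_type_tpf:
  assumes st: "same_type k U Es M a b" and Es: "Es \<subseteq> ksub U k"
    and g: "\<And>i. i < length a \<Longrightarrow> g (b ! i) = a ! i" and inj: "inj_on g (set b)"
    and D: "D \<subseteq> set b"
  shows "tpf k M Es (g ` D) = tpf k M Es D"
proof -
  have L: "length b = length a"
    using st by (rule same_type_length)
  have "finite D"
    using D finite_subset by blast
  then obtain "is" where idx: "set is \<subseteq> {..<length b}" "distinct (map ((!) b) is)" "set (map ((!) b) is) = D"
    using D by (rule obtain_indices)
  have len: "length is = card D"
    using distinct_card[OF idx(2)] idx(3) by simp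
  have a_is: "map ((!) a) is = map g (map ((!) b) is)"
    using idx(1) g L by auto
  then have g_D: "set (map ((!) a) is) = g ` D"
    using idx(3) by (simp only: set_map)
  have card_g_D: "card (g ` D) = card D"
    using inj D by (auto intro: card_image inj_on_subset)
  have "(g ` D \<union> E \<in> Es) \<longleftrightarrow> (D \<union> E \<in> Es)" if E: "E \<in> ksub M (k - card D)" for E
  proof (cases "card D \<le> k")
    case True
    obtain es where es: "set es = E" "distinct es"
      using E finite_distinct_list by (auto simp: ksub_def)
    have "length es = k - card D" "set es \<subseteq> M"
      using es E distinct_card[OF es(2)] by (auto simp: ksub_def)
    then have lengths: "length is + length es = k"
      using len True by simp
    have "(g ` D \<union> E \<in> Es) \<longleftrightarrow> distinct (map ((!) a) is @ es) \<and> set (map ((!) a) is @ es) \<in> Es"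
      using set_in_edges_imp_distinct[OF Es, of "map ((!) a) is @ es"] lengths g_D es by auto
    also have "\<dots> \<longleftrightarrow> distinct (map ((!) b) is @ es) \<and> set (map ((!) b) is @ es) \<in> Es"
      using idx(1) L lengths \<open>set es \<subseteq> M\<close> by (intro same_type_edge_iff[OF st]) auto
    also have "\<dots> \<longleftrightarrow> (D \<union> E \<in> Es)"
      using set_in_edges_imp_distinct[OF Es, of "map ((!) b) is @ es"] lengths idx(3) es by auto
    finally show ?thesis .
  next
    case False
    then have "E = {}"
      using E by (auto simp: ksub_def)
    then show ?thesis
      using False Es card_g_D by (auto simp: ksub_def)
  qed
  then show ?thesis
    unfolding tpf_def card_g_D by (intro restrict_ext) auto
qed

section \<open>Finiteness of definable sets\<close>

lemma infinite_iff_distinct_lists: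
  "infinite Z \<longleftrightarrow> (\<forall>n. \<exists>ys. length ys = n \<and> distinct ys \<and> set ys \<subseteq> Z)"
proof
  assume "infinite Z"
  show "\<forall>n. \<exists>ys. length ys = n \<and> distinct ys \<and> set ys \<subseteq> Z"
  proof
    fix n
    obtain S where "S \<subseteq> Z" "finite S" "card S = n"
      using infinite_arbitrarily_large[OF \<open>infinite Z\<close>] by blast
    then show "\<exists>ys. length ys = n \<and> distinct ys \<and> set ys \<subseteq> Z"
      by (metis distinct_card finite_distinct_list)
  qed
next
  assume lists: "\<forall>n. \<exists>ys. length ys = n \<and> distinct ys \<and> set ys \<subseteq> Z"
  show "infinite Z"
  proof
    assume "finite Z"
    obtain ys where "length ys = Suc (card Z)" "distinct ys" "set ys \<subseteq> Z"
      using lists by blast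
    then show False
      using card_mono[OF \<open>finite Z\<close>, of "set ys"] by (simp add: distinct_card)
  qed
qed

text \<open>Translates the variable convention of \<^const>\<open>inst\<close> (object variable \<open>0\<close>, parameters
  \<open>1, \<dots>, L\<close>) into that of \<^const>\<open>override\<close> (parameters \<open>0, \<dots>, L - 1\<close>, object variable \<open>L\<close>).\<close>
definition shift_var0 :: "nat \<Rightarrow> nat \<Rightarrow> nat" where
  "shift_var0 L i = (if i = 0 then L else if i \<le> L then i - 1 else i)"

lemma inj_shift_var0: "inj (shift_var0 L)"
  unfolding inj_def shift_var0_def by auto

lemma sat_inst_conv_override:
  assumes "fv \<phi> \<subseteq> {0..length a}"
  shows "sat D G (inst x a) \<phi> \<longleftrightarrow> sat D G ((override a v)(length a := x)) (rename_fm (shift_var0 (length a)) \<phi>)"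
  unfolding sat_rename_fm[OF inj_shift_var0]
  using assms by (intro sat_cong_fv) (auto simp: shift_var0_def override_def inst_def)

lemma same_type_finite_definable:
  assumes st: "same_type k U Es M a b" and "wf k \<phi>" and fv: "fv \<phi> \<subseteq> {0..length a}"
  shows "finite {x\<in>U. sat U Es (inst x a) \<phi>} \<longleftrightarrow> finite {x\<in>U. sat U Es (inst x b) \<phi>}"
proof -
  let ?L = "length a"
  let ?\<psi> = "rename_fm (shift_var0 ?L) \<phi>"
  let ?v = "\<lambda>_. undefined"
  have fv_\<psi>: "fv ?\<psi> \<subseteq> {0..?L}"
    using fv by (auto simp: fv_rename_fm[OF inj_shift_var0] shift_var0_def)
  have count: "(\<exists>ys. length ys = n \<and> distinct ys \<and> set ys \<subseteq> {x\<in>U. sat U Es (inst x c) \<phi>})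
      \<longleftrightarrow> sat U Es (override c ?v) (at_least ?L n ?\<psi>)" if "length c = ?L" for c n
    unfolding sat_at_least[OF fv_\<psi>]
    using sat_inst_conv_override[of \<phi> c] fv that by auto
  have "(\<exists>ys. length ys = n \<and> distinct ys \<and> set ys \<subseteq> {x\<in>U. sat U Es (inst x a) \<phi>}) \<longleftrightarrow>
      (\<exists>ys. length ys = n \<and> distinct ys \<and> set ys \<subseteq> {x\<in>U. sat U Es (inst x b) \<phi>})" for n
  proof -
    have "(\<exists>ys. length ys = n \<and> distinct ys \<and> set ys \<subseteq> {x\<in>U. sat U Es (inst x a) \<phi>}) \<longleftrightarrow>
        sat U Es (override a ?v) (at_least ?L n ?\<psi>)"
      by (rule count) (rule refl)
    also have "\<dots> \<longleftrightarrow> sat U Es (override b ?v) (at_least ?L n ?\<psi>)"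
      using assms by (intro same_type_sat[OF st] wf_at_least fv_at_least[OF fv_\<psi>]) simp
    also have "\<dots> \<longleftrightarrow> (\<exists>ys. length ys = n \<and> distinct ys \<and> set ys \<subseteq> {x\<in>U. sat U Es (inst x b) \<phi>})"
      by (rule count[symmetric]) (rule same_type_length[OF st])
    finally show ?thesis .
  qed
  then have "infinite {x\<in>U. sat U Es (inst x a) \<phi>} \<longleftrightarrow> infinite {x\<in>U. sat U Es (inst x b) \<phi>}"
    by (simp only: infinite_iff_distinct_lists)
  then show ?thesis
    by simp
qed

text \<open>The complete formula \<open>\<Xi>(x, a)\<close> in the convention of \<^const>\<open>inst\<close>; \<open>\<delta>\<close> gives the sign of
  \<open>R(x, \<dots>)\<close> on each list of \<open>k - 1\<close> parameter indices.\<close>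
definition complete_fm :: "nat \<Rightarrow> nat \<Rightarrow> (nat list \<Rightarrow> bool) \<Rightarrow> fm" where
  "complete_fm k L \<delta> = conjs (map (\<lambda>is. if \<delta> is then FRel (0 # map Suc is) else FNeg (FRel (0 # map Suc is)))
     (List.n_lists (k - 1) [0..<L]))"

definition Xi_signs :: "'u list \<Rightarrow> ('u set \<Rightarrow> bool) \<Rightarrow> nat list \<Rightarrow> bool" where
  "Xi_signs a eps is \<longleftrightarrow> distinct (map ((!) a) is) \<and> eps (set (map ((!) a) is))"

lemma fv_complete_fm: "fv (complete_fm k L \<delta>) \<subseteq> {0..L}"
  by (auto simp: complete_fm_def set_n_lists)

lemma wf_complete_fm: "1 \<le> k \<Longrightarrow> wf k (complete_fm k L \<delta>)"
  by (auto simp: complete_fm_def set_n_lists)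

lemma complete_fm_cong:
  "(\<And>is. length is = k - 1 \<Longrightarrow> set is \<subseteq> {..<L} \<Longrightarrow> \<delta> is = \<delta>' is) \<Longrightarrow> complete_fm k L \<delta> = complete_fm k L \<delta>'"
  unfolding complete_fm_def by (intro arg_cong[where f = conjs] map_cong) (auto simp: set_n_lists atLeast0LessThan)

lemma sat_complete_fm: "sat D G v (complete_fm k L \<delta>) \<longleftrightarrow>
    (\<forall>is. length is = k - 1 \<and> set is \<subseteq> {..<L} \<longrightarrow> (sat D G v (FRel (0 # map Suc is)) \<longleftrightarrow> \<delta> is))"
proof -
  have literal: "sat D G v (if b then \<phi> else FNeg \<phi>) \<longleftrightarrow> (sat D G v \<phi> \<longleftrightarrow> b)" for b \<phi>
    by simp
  show ?thesis
    unfolding complete_fm_def sat_conjs set_map set_n_lists Ball_image_comp comp_def literal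
    by (simp add: atLeast0LessThan)
qed

lemma ball_ksub_set_conv_indices:
  "(\<forall>S\<in>ksub (set a) n. P S) \<longleftrightarrow>
    (\<forall>is. length is = n \<and> set is \<subseteq> {..<length a} \<longrightarrow> distinct (map ((!) a) is) \<longrightarrow> P (set (map ((!) a) is)))"
proof
  assume P: "\<forall>S\<in>ksub (set a) n. P S"
  show "\<forall>is. length is = n \<and> set is \<subseteq> {..<length a} \<longrightarrow> distinct (map ((!) a) is) \<longrightarrow> P (set (map ((!) a) is))"
  proof (intro allI impI)
    fix "is" assume "length is = n \<and> set is \<subseteq> {..<length a}" "distinct (map ((!) a) is)"
    then have "set (map ((!) a) is) \<in> ksub (set a) n"
      using distinct_card by (fastforce simp: ksub_def)
    with P show "P (set (map ((!) a) is))" ..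
  qed
next
  assume P: "\<forall>is. length is = n \<and> set is \<subseteq> {..<length a} \<longrightarrow> distinct (map ((!) a) is) \<longrightarrow> P (set (map ((!) a) is))"
  show "\<forall>S\<in>ksub (set a) n. P S"
  proof
    fix S assume S: "S \<in> ksub (set a) n"
    then have "finite S" "S \<subseteq> set a"
      by (auto simp: ksub_def)
    then obtain "is" where idx: "set is \<subseteq> {..<length a}" "distinct (map ((!) a) is)" "set (map ((!) a) is) = S"
      by (rule obtain_indices)
    moreover have "length is = n"
      using S distinct_card[OF idx(2)] idx(3) by (auto simp: ksub_def)
    ultimately show "P S"
      using P by blast
  qed
qed

lemma Xi_set_definable:
  assumes Es: "Es \<subseteq> ksub U k" and "1 \<le> k"
  shows "Xi_set k U Es (set a) eps = {x\<in>U. sat U Es (inst x a) (complete_fm k (length a) (Xi_signs a eps))}"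
proof -
  have literal: "(sat U Es (inst x a) (FRel (0 # map Suc is)) \<longleftrightarrow> Xi_signs a eps is) \<longleftrightarrow>
      (distinct (map ((!) a) is) \<longrightarrow> (insert x (set (map ((!) a) is)) \<in> Es) = eps (set (map ((!) a) is)))"
    if range: "set is \<subseteq> {..<length a}" and len: "length is = k - 1" for x "is"
  proof -
    have "map (inst x a) (map Suc is) = map ((!) a) is"
      unfolding map_map by (rule map_cong) (use range in \<open>auto simp: inst_def\<close>)
    moreover have "inst x a 0 = x"
      by (simp add: inst_def)
    ultimately have "map (inst x a) (0 # map Suc is) = x # map ((!) a) is"
      by (simp only: list.map)
    moreover have "insert x (set (map ((!) a) is)) \<notin> Es"
      if "x \<in> set (map ((!) a) is)" "distinct (map ((!) a) is)"
    proof
      assume "insert x (set (map ((!) a) is)) \<in> Es"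
      then have "card (insert x (set (map ((!) a) is))) = k"
        using Es unfolding ksub_def by blast
      then show False
        using insert_absorb[OF that(1)] distinct_card[OF that(2)] len \<open>1 \<le> k\<close> by simp
    qed
    ultimately show ?thesis
      by (simp only: sat.simps) (auto simp: Xi_signs_def)
  qed
  have "sat U Es (inst x a) (complete_fm k (length a) (Xi_signs a eps)) \<longleftrightarrow>
      (\<forall>is. length is = k - 1 \<and> set is \<subseteq> {..<length a} \<longrightarrow>
        (distinct (map ((!) a) is) \<longrightarrow> (insert x (set (map ((!) a) is)) \<in> Es) = eps (set (map ((!) a) is))))" for x
    unfolding sat_complete_fm by (intro all_cong1 imp_cong[OF refl]) (use literal in blast)
  then show ?thesis
    unfolding Xi_set_def ball_ksub_set_conv_indices by auto
qed

lemma same_type_finite_Xi_diff: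
  assumes st: "same_type k U Es M a b" and Es: "Es \<subseteq> ksub U k" and "1 \<le> k"
    and "wf k \<phi>" and fv: "fv \<phi> \<subseteq> {0..length a}"
    and signs: "\<And>is. length is = k - 1 \<Longrightarrow> set is \<subseteq> {..<length a} \<Longrightarrow> Xi_signs b eps' is = Xi_signs a eps is"
  shows "finite (Xi_set k U Es (set a) eps - {x\<in>U. sat U Es (inst x a) \<phi>}) \<longleftrightarrow>
         finite (Xi_set k U Es (set b) eps' - {x\<in>U. sat U Es (inst x b) \<phi>})"
proof -
  let ?\<Xi> = "complete_fm k (length a) (Xi_signs a eps)"
  let ?\<psi> = "FConj ?\<Xi> (FNeg \<phi>)"
  have L: "length b = length a"
    using st by (rule same_type_length)
  have "complete_fm k (length b) (Xi_signs b eps') = ?\<Xi>"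
    unfolding L using signs by (rule complete_fm_cong)
  then have "Xi_set k U Es (set a) eps - {x\<in>U. sat U Es (inst x a) \<phi>} = {x\<in>U. sat U Es (inst x a) ?\<psi>}"
    and "Xi_set k U Es (set b) eps' - {x\<in>U. sat U Es (inst x b) \<phi>} = {x\<in>U. sat U Es (inst x b) ?\<psi>}"
    by (auto simp: Xi_set_definable[OF Es \<open>1 \<le> k\<close>])
  moreover have "wf k ?\<psi>" "fv ?\<psi> \<subseteq> {0..length a}"
    using wf_complete_fm[OF \<open>1 \<le> k\<close>] fv_complete_fm fv \<open>wf k \<phi>\<close> by auto
  ultimately show ?thesis
    using same_type_finite_definable[OF st] by presburger
qed

section \<open>Symmetry of the hypergraphon argument\<close>

text \<open>\<^const>\<open>Warg\<close> for an arbitrary numbering \<open>\<beta>\<close> of the parameters by \<open>{2..k}\<close>: changing the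
  numbering permutes the coordinates, which \<open>W\<close> does not see.\<close>
definition hg_arg :: "nat \<Rightarrow> (nat \<Rightarrow> 'a) \<Rightarrow> (bool \<Rightarrow> nat \<Rightarrow> 'a set \<Rightarrow> real) \<Rightarrow> nat set \<Rightarrow> real" where
  "hg_arg k \<beta> val = (\<lambda>I\<in>hg_index k. val (1 \<in> I) (card I) (\<beta> ` (I - {1})))"

definition Warg_val :: "nat \<Rightarrow> 'u set \<Rightarrow> 'u set set \<Rightarrow> (nat \<Rightarrow> ('u set \<Rightarrow> bool) \<Rightarrow> real)
    \<Rightarrow> ('u set \<Rightarrow> bool) \<Rightarrow> ('u set \<Rightarrow> 'u set \<Rightarrow> bool) \<Rightarrow> bool \<Rightarrow> nat \<Rightarrow> 'u set \<Rightarrow> real" where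
  "Warg_val k M Es f p q has_x n D =
     (if has_x then (if D = {} then f 1 p else f n (q D)) else f n (tpf k M Es D))"

lemma Warg_eq_hg_arg:
  "Warg k M Es f C0 p q = hg_arg k (SOME \<beta>. bij_betw \<beta> {2..k} C0) (Warg_val k M Es f p q)"
  unfolding Warg_def hg_arg_def Warg_val_def Let_def ..

lemma hg_index_subset: "I \<in> hg_index k \<Longrightarrow> I - {1} \<subseteq> {2..k}"
  by (auto simp: hg_index_def)

lemma finite_hg_index: "I \<in> hg_index k \<Longrightarrow> finite I"
  unfolding hg_index_def using finite_subset by blast

lemma card_hg_index: "I \<in> hg_index k \<Longrightarrow> 1 \<le> card I \<and> card I \<le> k - 1"
  by (simp add: hg_index_def)

lemma permutes_relating_bijections:
  assumes \<beta>: "bij_betw \<beta> A C" and \<beta>': "bij_betw \<beta>' A C"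
  obtains \<sigma> where "\<sigma> permutes A" "\<And>x. x \<in> A \<Longrightarrow> \<beta> (\<sigma> x) = \<beta>' x"
proof
  define \<sigma> where "\<sigma> x = (if x \<in> A then the_inv_into A \<beta> (\<beta>' x) else x)" for x
  have "bij_betw (the_inv_into A \<beta> \<circ> \<beta>') A A"
    using \<beta>' bij_betw_the_inv_into[OF \<beta>] by (rule bij_betw_trans)
  then have "bij_betw \<sigma> A A"
    by (rule bij_betw_cong[THEN iffD1, rotated]) (simp add: \<sigma>_def)
  then show "\<sigma> permutes A"
    by (rule bij_imp_permutes) (auto simp: \<sigma>_def)
  show "\<beta> (\<sigma> x) = \<beta>' x" if "x \<in> A" for x
  proof -
    have "\<beta>' x \<in> \<beta> ` A"
      using \<beta> \<beta>' that by (metis bij_betw_apply bij_betw_imp_surj_on)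
    then show ?thesis
      using that \<beta> unfolding \<sigma>_def by (simp add: bij_betw_def f_the_inv_into_f)
  qed
qed

lemma hg_arg_permute:
  assumes "\<sigma> permutes {2..k}" and \<beta>_\<sigma>: "\<And>x. x \<in> {2..k} \<Longrightarrow> \<beta> (\<sigma> x) = \<beta>' x"
  shows "hg_arg k \<beta>' val = (\<lambda>I. hg_arg k \<beta> val (\<sigma> ` I))"
proof
  fix I
  have \<sigma>: "\<sigma> permutes {1..k}"
    using assms(1) by (rule permutes_subset) auto
  have "\<sigma> ` I \<subseteq> {1..k} \<longleftrightarrow> I \<subseteq> {1..k}"
    using permutes_in_image[OF \<sigma>] by blast
  moreover have card: "card (\<sigma> ` I) = card I"
    using permutes_inj[OF \<sigma>] by (simp add: card_image inj_on_subset)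
  ultimately have index: "\<sigma> ` I \<in> hg_index k \<longleftrightarrow> I \<in> hg_index k"
    by (simp add: hg_index_def)
  show "hg_arg k \<beta>' val I = hg_arg k \<beta> val (\<sigma> ` I)"
  proof (cases "I \<in> hg_index k")
    case True
    have "\<sigma> 1 = 1"
      using assms(1) by (simp add: permutes_def)
    then have "1 \<in> \<sigma> ` I \<longleftrightarrow> 1 \<in> I" and "\<sigma> ` I - {1} = \<sigma> ` (I - {1})"
      using permutes_inj[OF \<sigma>] by (metis inj_image_mem_iff, simp add: image_set_diff)
    moreover have "\<beta> ` \<sigma> ` (I - {1}) = \<beta>' ` (I - {1})"
      using \<beta>_\<sigma> hg_index_subset[OF True] unfolding image_image by (intro image_cong) auto
    ultimately show ?thesis
      using True index card by (simp add: hg_arg_def)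
  next
    case False
    then show ?thesis
      using index by (simp add: hg_arg_def)
  qed
qed

lemma W_hg_arg_bij_invariant:
  assumes W: "borel_hypergraphon k W"
    and \<beta>: "bij_betw \<beta> {2..k} C" and \<beta>': "bij_betw \<beta>' {2..k} C"
    and space: "hg_arg k \<beta> val \<in> space (hg_space k)"
  shows "W (hg_arg k \<beta>' val) = W (hg_arg k \<beta> val)"
proof -
  obtain \<sigma> where \<sigma>: "\<sigma> permutes {2..k}" and \<beta>_\<sigma>: "\<And>x. x \<in> {2..k} \<Longrightarrow> \<beta> (\<sigma> x) = \<beta>' x"
    using permutes_relating_bijections[OF \<beta> \<beta>'] by blast
  have "hg_arg k \<beta>' val = (\<lambda>I. hg_arg k \<beta> val (\<sigma> ` I))"
    using \<sigma> \<beta>_\<sigma> by (rule hg_arg_permute)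
  moreover have "\<sigma> permutes {1..k}"
    using \<sigma> by (rule permutes_subset) auto
  then have "W (\<lambda>I. hg_arg k \<beta> val (\<sigma> ` I)) = W (hg_arg k \<beta> val)"
    using W space unfolding borel_hypergraphon_def by blast
  ultimately show ?thesis
    by simp
qed

lemma hg_arg_Warg_val_space:
  assumes "2 \<le> k" and f01: "\<And>j x. 1 \<le> j \<Longrightarrow> j \<le> k - 1 \<Longrightarrow> x \<in> space (lam M k j) \<Longrightarrow> f j x \<in> {0..1}"
    and \<beta>: "bij_betw \<beta> {2..k} C" and p: "p \<in> space (lam M k 1)"
    and q: "\<And>D. D \<subseteq> C \<Longrightarrow> D \<noteq> {} \<Longrightarrow> card D \<le> k - 2 \<Longrightarrow> q D \<in> space (lam M k (1 + card D))"
  shows "hg_arg k \<beta> (Warg_val k M Es f p q) \<in> space (hg_space k)"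
proof -
  have "Warg_val k M Es f p q (1 \<in> I) (card I) (\<beta> ` (I - {1})) \<in> {0..1}" if I: "I \<in> hg_index k" for I
  proof -
    let ?D = "\<beta> ` (I - {1})"
    have "finite I"
      using I by (rule finite_hg_index)
    have D: "?D \<subseteq> C"
      using bij_betw_imp_surj_on[OF \<beta>] hg_index_subset[OF I] by blast
    have card_D: "card ?D = card (I - {1})"
      using inj_on_subset[OF bij_betw_imp_inj_on[OF \<beta>] hg_index_subset[OF I]] by (rule card_image)
    have n: "1 \<le> card I" "card I \<le> k - 1"
      using card_hg_index[OF I] by auto
    show ?thesis
    proof (cases "1 \<in> I")
      case True
      then have "card ?D = card I - 1"
        using card_D \<open>finite I\<close> by simp
      show ?thesis
      proof (cases "?D = {}")
        case True
        then show ?thesis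
          using \<open>1 \<in> I\<close> p \<open>2 \<le> k\<close> f01[of 1 p] by (simp add: Warg_val_def)
      next
        case False
        then have "q ?D \<in> space (lam M k (card I))"
          using q[OF D] n \<open>card ?D = card I - 1\<close> by simp
        then show ?thesis
          using \<open>1 \<in> I\<close> False n f01[of "card I" "q ?D"] by (simp add: Warg_val_def)
      qed
    next
      case False
      then have "tpf k M Es ?D \<in> space (lam M k (card I))"
        using card_D by (simp add: tpf_def lam_def space_PiM)
      then show ?thesis
        using False n f01[of "card I" "tpf k M Es ?D"] by (simp add: Warg_val_def)
    qed
  qed
  then show ?thesis
    by (simp add: hg_arg_def hg_space_def space_PiM unitI_def)
qed

lemma bij_betw_some_numbering:
  assumes "finite C" "card C = k - 1"
  shows "bij_betw (SOME \<beta>. bij_betw \<beta> {2..k} C) {2..k} C"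
proof -
  have "\<exists>\<beta>. bij_betw \<beta> {2..k} C"
    using assms by (intro finite_same_card_bij) auto
  then show ?thesis
    by (rule someI_ex)
qed

lemma W_Warg_relabel:
  assumes "2 \<le> k" and W: "borel_hypergraphon k W"
    and f01: "\<And>j x. 1 \<le> j \<Longrightarrow> j \<le> k - 1 \<Longrightarrow> x \<in> space (lam M k j) \<Longrightarrow> f j x \<in> {0..1}"
    and C0: "finite C0" "card C0 = k - 1" and g: "inj_on g C0"
    and p: "p \<in> space (lam M k 1)"
    and q: "\<And>D. D \<subseteq> g ` C0 \<Longrightarrow> D \<noteq> {} \<Longrightarrow> card D \<le> k - 2 \<Longrightarrow> q D \<in> space (lam M k (1 + card D))"
    and q': "\<And>D. D \<subseteq> C0 \<Longrightarrow> D \<noteq> {} \<Longrightarrow> card D \<le> k - 2 \<Longrightarrow> q' D = q (g ` D)"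
    and tpf: "\<And>D. D \<subseteq> C0 \<Longrightarrow> tpf k M Es (g ` D) = tpf k M Es D"
  shows "W (Warg k M Es f C0 p q') = W (Warg k M Es f (g ` C0) p q)"
proof -
  define \<beta>0 where "\<beta>0 = (SOME \<beta>. bij_betw \<beta> {2..k} C0)"
  define \<beta>1 where "\<beta>1 = (SOME \<beta>. bij_betw \<beta> {2..k} (g ` C0))"
  have \<beta>0: "bij_betw \<beta>0 {2..k} C0"
    unfolding \<beta>0_def using C0 by (rule bij_betw_some_numbering)
  have \<beta>1: "bij_betw \<beta>1 {2..k} (g ` C0)"
    unfolding \<beta>1_def using C0 g by (intro bij_betw_some_numbering) (auto simp: card_image)
  have g\<beta>0: "bij_betw (g \<circ> \<beta>0) {2..k} (g ` C0)"
    using \<beta>0 inj_on_imp_bij_betw[OF g] by (rule bij_betw_trans)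
  have "hg_arg k \<beta>0 (Warg_val k M Es f p q') = hg_arg k (g \<circ> \<beta>0) (Warg_val k M Es f p q)"
    unfolding hg_arg_def
  proof (rule restrict_ext)
    fix I assume I: "I \<in> hg_index k"
    let ?D = "\<beta>0 ` (I - {1})"
    have D: "?D \<subseteq> C0"
      using bij_betw_imp_surj_on[OF \<beta>0] hg_index_subset[OF I] by blast
    have "card ?D \<le> k - 2" if "1 \<in> I"
    proof -
      have "card ?D \<le> card I - 1"
        using card_image_le[of "I - {1}" \<beta>0] that finite_hg_index[OF I] by simp
      then show ?thesis
        using card_hg_index[OF I] by arith
    qed
    then have "Warg_val k M Es f p q' (1 \<in> I) (card I) ?D = Warg_val k M Es f p q (1 \<in> I) (card I) (g ` ?D)"
      using q'[OF D] tpf[OF D] by (cases "1 \<in> I") (simp_all add: Warg_val_def)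
    then show "Warg_val k M Es f p q' (1 \<in> I) (card I) ?D
        = Warg_val k M Es f p q (1 \<in> I) (card I) ((g \<circ> \<beta>0) ` (I - {1}))"
      by (simp add: image_comp)
  qed
  moreover have "W (hg_arg k (g \<circ> \<beta>0) (Warg_val k M Es f p q)) = W (hg_arg k \<beta>1 (Warg_val k M Es f p q))"
    using W \<beta>1 g\<beta>0 hg_arg_Warg_val_space[OF \<open>2 \<le> k\<close> f01 \<beta>1 p q] by (rule W_hg_arg_bij_invariant)
  ultimately show ?thesis
    unfolding Warg_eq_hg_arg \<beta>0_def[symmetric] \<beta>1_def[symmetric] by simp
qed

section \<open>Invariance of the measure of a complete formula\<close>

lemma integral_distr_right_inverse:
  fixes F :: "_ \<Rightarrow> real"
  assumes T: "T \<in> measurable P Q" and distr: "distr P Q T = Q" and T': "T' \<in> measurable Q P"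
    and inverse: "\<And>y. y \<in> space Q \<Longrightarrow> T (T' y) = y"
  shows "integral\<^sup>L Q F = (LINT x|P. F (T x))"
proof (cases "F \<in> borel_measurable Q")
  case True
  then show ?thesis
    using integral_distr[OF T True] distr by simp
next
  case False
  have "(\<lambda>x. F (T x)) \<notin> borel_measurable P"
  proof
    assume "(\<lambda>x. F (T x)) \<in> borel_measurable P"
    then have "(\<lambda>y. F (T (T' y))) \<in> borel_measurable Q"
      using T' by (rule measurable_compose[rotated])
    then have "F \<in> borel_measurable Q"
      by (rule measurable_cong[THEN iffD1, rotated]) (simp add: inverse)
    with False show False ..
  qed
  then have "\<not> integrable P (\<lambda>x. F (T x))"
    by blast
  moreover have "\<not> integrable Q F"
    using False by blast
  ultimately show ?thesis
    by (simp add: not_integrable_integral_eq)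
qed

lemma integral_PiM_reindex:
  fixes F :: "_ \<Rightarrow> real"
  assumes h: "bij_betw h I J" and N: "\<And>j. j \<in> J \<Longrightarrow> prob_space (N j)"
  shows "(LINT y|PiM I (\<lambda>i. N (h i)). F y) = (LINT x|PiM J N. F (\<lambda>i\<in>I. x (h i)))"
proof (rule integral_distr_right_inverse)
  show "(\<lambda>x. \<lambda>i\<in>I. x (h i)) \<in> measurable (PiM J N) (PiM I (\<lambda>i. N (h i)))"
    using bij_betw_apply[OF h] by (intro measurable_restrict measurable_component_singleton)
  show "distr (PiM J N) (PiM I (\<lambda>i. N (h i))) (\<lambda>x. \<lambda>i\<in>I. x (h i)) = PiM I (\<lambda>i. N (h i))"
    using h N by (intro distr_PiM_reindex) (auto simp: bij_betw_def)
  let ?h' = "the_inv_into I h"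
  have h': "?h' j \<in> I" "h (?h' j) = j" if "j \<in> J" for j
    using h that by (auto simp: bij_betw_def intro: the_inv_into_into f_the_inv_into_f)
  show "(\<lambda>y. \<lambda>j\<in>J. y (?h' j)) \<in> measurable (PiM I (\<lambda>i. N (h i))) (PiM J N)"
  proof (rule measurable_restrict)
    fix j assume "j \<in> J"
    then show "(\<lambda>y. y (?h' j)) \<in> measurable (PiM I (\<lambda>i. N (h i))) (N j)"
      using measurable_component_singleton[of "?h' j" I "\<lambda>i. N (h i)"] h' by simp
  qed
  fix y assume "y \<in> space (PiM I (\<lambda>i. N (h i)))"
  then have "y \<in> (\<Pi>\<^sub>E i\<in>I. space (N (h i)))"
    by (simp add: space_PiM)
  moreover have "the_inv_into I h (h i) = i" if "i \<in> I" for i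
    using h that by (simp add: bij_betw_def the_inv_into_f_f)
  ultimately show "(\<lambda>i\<in>I. (\<lambda>j\<in>J. y (?h' j)) (h i)) = y"
    using bij_betw_apply[OF h] by (auto simp: PiE_def extensional_def fun_eq_iff)
qed

lemma bij_betw_image_subsets:
  assumes g: "bij_betw g A B" and PQ: "\<And>D. D \<subseteq> A \<Longrightarrow> Q (g ` D) \<longleftrightarrow> P D"
  shows "bij_betw (image g) {D. D \<subseteq> A \<and> P D} {D. D \<subseteq> B \<and> Q D}"
proof (rule bij_betw_subset[OF bij_betw_Pow[OF g]])
  show "{D. D \<subseteq> A \<and> P D} \<subseteq> Pow A"
    by blast
  show "image g ` {D. D \<subseteq> A \<and> P D} = {D. D \<subseteq> B \<and> Q D}"
  proof (intro equalityI subsetI)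
    fix D assume "D \<in> image g ` {D. D \<subseteq> A \<and> P D}"
    then obtain D' where D': "D' \<subseteq> A" "P D'" "D = g ` D'"
      by blast
    then have "D \<subseteq> B"
      using bij_betw_imp_surj_on[OF g] by blast
    moreover have "Q D"
      using PQ[OF D'(1)] D'(2,3) by simp
    ultimately show "D \<in> {D. D \<subseteq> B \<and> Q D}"
      by simp
  next
    fix D assume D: "D \<in> {D. D \<subseteq> B \<and> Q D}"
    then have "D \<in> image g ` Pow A"
      using bij_betw_imp_surj_on[OF bij_betw_Pow[OF g]] by simp
    then obtain D' where D': "D' \<subseteq> A" "D = g ` D'"
      by blast
    then have "P D'"
      using PQ[OF D'(1)] D by simp
    with D' show "D \<in> image g ` {D. D \<subseteq> A \<and> P D}"
      by blast
  qed
qed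

lemma bij_betw_image_ksub:
  assumes "bij_betw g A B"
  shows "bij_betw (image g) (ksub A n) (ksub B n)"
proof -
  have "finite (g ` D) \<and> card (g ` D) = n \<longleftrightarrow> finite D \<and> card D = n" if "D \<subseteq> A" for D
    using inj_on_subset[OF bij_betw_imp_inj_on[OF assms] that] by (simp add: finite_image_iff card_image)
  then show ?thesis
    unfolding ksub_def using bij_betw_image_subsets[OF assms, of "\<lambda>D. finite D \<and> card D = n" "\<lambda>D. finite D \<and> card D = n"] by simp
qed

lemma bij_betw_image_qidx:
  assumes "bij_betw g A B"
  shows "bij_betw (image g) (qidx k A) (qidx k B)"
proof -
  have "card (g ` D) = card D" if "D \<subseteq> A" for D
    using inj_on_subset[OF bij_betw_imp_inj_on[OF assms] that] by (rule card_image)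
  then show ?thesis
    unfolding qidx_def using bij_betw_image_subsets[OF assms, of "\<lambda>D. 1 \<le> card D \<and> card D \<le> k - 2" "\<lambda>D. 1 \<le> card D \<and> card D \<le> k - 2"] by simp
qed

lemma prob_space_lam: "prob_space (lam M k j)"
  unfolding lam_def by (intro prob_space_PiM) (simp add: prob_space_measure_pmf)

definition mu_cf_p_factor :: "nat \<Rightarrow> 'u set \<Rightarrow> ('u set \<Rightarrow> bool) \<Rightarrow> ('u set \<Rightarrow> bool) \<Rightarrow> real" where
  "mu_cf_p_factor k B eps p = (if (\<forall>B0\<in>ksub B (k - 1). p B0 = eps B0) then 1 else 0)"

definition mu_cf_q_factor :: "nat \<Rightarrow> 'u set \<Rightarrow> 'u set \<Rightarrow> ('u set \<Rightarrow> bool) \<Rightarrow> ('u set \<Rightarrow> 'u set \<Rightarrow> bool) \<Rightarrow> real" where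
  "mu_cf_q_factor k B C eps q =
     (\<Prod>C0\<in>qidx k C. \<Prod>B0\<in>ksub B (k - 1 - card C0). if q C0 B0 = eps (B0 \<union> C0) then 1 else 0)"

definition mu_cf_W_factor :: "nat \<Rightarrow> 'u set \<Rightarrow> 'u set set \<Rightarrow> (nat \<Rightarrow> ('u set \<Rightarrow> bool) \<Rightarrow> real)
    \<Rightarrow> ((nat set \<Rightarrow> real) \<Rightarrow> real) \<Rightarrow> 'u set \<Rightarrow> ('u set \<Rightarrow> bool)
    \<Rightarrow> ('u set \<Rightarrow> bool) \<Rightarrow> ('u set \<Rightarrow> 'u set \<Rightarrow> bool) \<Rightarrow> real" where
  "mu_cf_W_factor k M Es f W C eps p q = (\<Prod>C0\<in>ksub C (k - 1). Wsgn (eps C0) (W (Warg k M Es f C0 p q)))"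

lemma mu_cf_eq_integral:
  "mu_cf k M Es f W B C eps = (LINT p|lam M k 1. LINT q|PiM (qidx k C) (\<lambda>C0. lam M k (1 + card C0)).
     mu_cf_p_factor k B eps p * mu_cf_q_factor k B C eps q * mu_cf_W_factor k M Es f W C eps p q)"
  unfolding mu_cf_def mu_cf_p_factor_def mu_cf_q_factor_def mu_cf_W_factor_def ..

lemma mu_cf_p_factor_relabel:
  assumes g_B: "\<And>x. x \<in> B \<Longrightarrow> g x = x"
    and eps: "\<And>S. S \<in> ksub (B \<union> C') (k - 1) \<Longrightarrow> eps' S = eps (g ` S)"
  shows "mu_cf_p_factor k B eps' p = mu_cf_p_factor k B eps p"
proof -
  have "eps' B0 = eps B0" if "B0 \<in> ksub B (k - 1)" for B0
  proof -
    have "g ` B0 = B0"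
      using g_B that by (force simp: ksub_def)
    then show ?thesis
      using eps[of B0] that by (auto simp: ksub_def)
  qed
  then show ?thesis
    unfolding mu_cf_p_factor_def by auto
qed

lemma mu_cf_q_factor_relabel:
  assumes g_B: "\<And>x. x \<in> B \<Longrightarrow> g x = x" and disj: "B \<inter> C' = {}" and g: "bij_betw g C' C"
    and eps: "\<And>S. S \<in> ksub (B \<union> C') (k - 1) \<Longrightarrow> eps' S = eps (g ` S)"
  shows "mu_cf_q_factor k B C' eps' (\<lambda>D\<in>qidx k C'. q (g ` D)) = mu_cf_q_factor k B C eps q"
proof -
  let ?G = "\<lambda>C0. \<Prod>B0\<in>ksub B (k - 1 - card C0). if q C0 B0 = eps (B0 \<union> C0) then 1 else (0::real)"
  have "(\<Prod>B0\<in>ksub B (k - 1 - card C0). if (\<lambda>D\<in>qidx k C'. q (g ` D)) C0 B0 = eps' (B0 \<union> C0) then 1 else 0)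
      = ?G (g ` C0)" if C0: "C0 \<in> qidx k C'" for C0
  proof -
    have C0': "C0 \<subseteq> C'" "1 \<le> card C0" "card C0 \<le> k - 2"
      using C0 by (auto simp: qidx_def)
    then have "finite C0"
      by (intro card_ge_0_finite) simp
    have card_g: "card (g ` C0) = card C0"
      using inj_on_subset[OF bij_betw_imp_inj_on[OF g] C0'(1)] by (rule card_image)
    have "eps' (B0 \<union> C0) = eps (B0 \<union> g ` C0)" if B0: "B0 \<in> ksub B (k - 1 - card C0)" for B0
    proof -
      have "B0 \<inter> C0 = {}"
        using B0 C0' disj by (auto simp: ksub_def)
      then have "B0 \<union> C0 \<in> ksub (B \<union> C') (k - 1)"
        using B0 C0' \<open>finite C0\<close> by (auto simp: ksub_def card_Un_disjoint)
      moreover have "g ` B0 = B0"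
        using g_B B0 by (force simp: ksub_def)
      ultimately show ?thesis
        using eps by (simp add: image_Un)
    qed
    then show ?thesis
      using C0 card_g by (intro prod.cong) auto
  qed
  then have "mu_cf_q_factor k B C' eps' (\<lambda>D\<in>qidx k C'. q (g ` D)) = (\<Prod>C0\<in>qidx k C'. ?G (g ` C0))"
    unfolding mu_cf_q_factor_def by (rule prod.cong[OF refl])
  also have "\<dots> = (\<Prod>C0\<in>qidx k C. ?G C0)"
    using bij_betw_image_qidx[OF g] by (rule prod.reindex_bij_betw)
  finally show ?thesis
    unfolding mu_cf_q_factor_def .
qed

lemma mu_cf_W_factor_relabel:
  assumes "2 \<le> k" and W: "borel_hypergraphon k W"
    and f01: "\<And>j x. 1 \<le> j \<Longrightarrow> j \<le> k - 1 \<Longrightarrow> x \<in> space (lam M k j) \<Longrightarrow> f j x \<in> {0..1}"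
    and g: "bij_betw g C' C" and tpf: "\<And>D. D \<subseteq> C' \<Longrightarrow> tpf k M Es (g ` D) = tpf k M Es D"
    and eps: "\<And>S. S \<in> ksub C' (k - 1) \<Longrightarrow> eps' S = eps (g ` S)"
    and p: "p \<in> space (lam M k 1)" and q: "q \<in> space (PiM (qidx k C) (\<lambda>C0. lam M k (1 + card C0)))"
  shows "mu_cf_W_factor k M Es f W C' eps' p (\<lambda>D\<in>qidx k C'. q (g ` D)) = mu_cf_W_factor k M Es f W C eps p q"
proof -
  let ?H = "\<lambda>C0. Wsgn (eps C0) (W (Warg k M Es f C0 p q))"
  have "Wsgn (eps' C0) (W (Warg k M Es f C0 p (\<lambda>D\<in>qidx k C'. q (g ` D)))) = ?H (g ` C0)"
    if C0: "C0 \<in> ksub C' (k - 1)" for C0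
  proof -
    have C0': "C0 \<subseteq> C'" "finite C0" "card C0 = k - 1"
      using C0 by (auto simp: ksub_def)
    have "W (Warg k M Es f C0 p (\<lambda>D\<in>qidx k C'. q (g ` D))) = W (Warg k M Es f (g ` C0) p q)"
    proof (rule W_Warg_relabel[OF \<open>2 \<le> k\<close> W f01 C0'(2,3) inj_on_subset[OF bij_betw_imp_inj_on[OF g] C0'(1)] p])
      fix D assume D: "D \<subseteq> g ` C0" "D \<noteq> {}" "card D \<le> k - 2"
      moreover have "finite D"
        using D(1) C0'(2) by (meson finite_imageI finite_subset)
      ultimately have "D \<in> qidx k C"
        using bij_betw_imp_surj_on[OF g] C0'(1) by (auto simp: qidx_def Suc_le_eq card_gt_0_iff)
      then show "q D \<in> space (lam M k (1 + card D))"
        using q by (auto simp: space_PiM)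
    next
      fix D assume "D \<subseteq> C0" "D \<noteq> {}" "card D \<le> k - 2"
      then have "D \<in> qidx k C'"
        using C0' by (auto simp: qidx_def Suc_le_eq card_gt_0_iff intro: finite_subset)
      then show "(\<lambda>D\<in>qidx k C'. q (g ` D)) D = q (g ` D)"
        by simp
    next
      fix D assume "D \<subseteq> C0"
      then show "tpf k M Es (g ` D) = tpf k M Es D"
        using C0'(1) by (intro tpf) auto
    qed
    then show ?thesis
      using eps[OF C0] by simp
  qed
  then have "mu_cf_W_factor k M Es f W C' eps' p (\<lambda>D\<in>qidx k C'. q (g ` D)) = (\<Prod>C0\<in>ksub C' (k - 1). ?H (g ` C0))"
    unfolding mu_cf_W_factor_def by (rule prod.cong[OF refl])
  also have "\<dots> = (\<Prod>C0\<in>ksub C (k - 1). ?H C0)"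
    using bij_betw_image_ksub[OF g] by (rule prod.reindex_bij_betw)
  finally show ?thesis
    unfolding mu_cf_W_factor_def .
qed

lemma mu_cf_relabel:
  assumes "2 \<le> k" and W: "borel_hypergraphon k W"
    and f01: "\<And>j x. 1 \<le> j \<Longrightarrow> j \<le> k - 1 \<Longrightarrow> x \<in> space (lam M k j) \<Longrightarrow> f j x \<in> {0..1}"
    and g_B: "\<And>x. x \<in> B \<Longrightarrow> g x = x" and disj: "B \<inter> C' = {}" and g: "bij_betw g C' C"
    and tpf: "\<And>D. D \<subseteq> C' \<Longrightarrow> tpf k M Es (g ` D) = tpf k M Es D"
    and eps: "\<And>S. S \<in> ksub (B \<union> C') (k - 1) \<Longrightarrow> eps' S = eps (g ` S)"
  shows "mu_cf k M Es f W B C' eps' = mu_cf k M Es f W B C eps"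
proof -
  let ?N = "\<lambda>C0. lam M k (1 + card C0)"
  let ?F = "\<lambda>C eps p q. mu_cf_p_factor k B eps p * mu_cf_q_factor k B C eps q * mu_cf_W_factor k M Es f W C eps p q"
  have N_g: "PiM (qidx k C') ?N = PiM (qidx k C') (\<lambda>C0. ?N (g ` C0))"
    using bij_betw_imp_inj_on[OF g] by (intro PiM_cong) (auto simp: qidx_def card_image inj_on_subset)
  have eps_C': "eps' S = eps (g ` S)" if "S \<in> ksub C' (k - 1)" for S
    using that by (intro eps) (auto simp: ksub_def)
  have "(LINT q|PiM (qidx k C') ?N. ?F C' eps' p q) = (LINT q|PiM (qidx k C) ?N. ?F C' eps' p (\<lambda>D\<in>qidx k C'. q (g ` D)))" for p
    unfolding N_g by (rule integral_PiM_reindex[OF bij_betw_image_qidx[OF g] prob_space_lam])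
  also have "\<dots> p = (LINT q|PiM (qidx k C) ?N. ?F C eps p q)" if "p \<in> space (lam M k 1)" for p
    using mu_cf_p_factor_relabel[of B g C' k eps' eps, OF g_B eps]
      mu_cf_q_factor_relabel[of B g C' C k eps' eps, OF g_B disj g eps]
      mu_cf_W_factor_relabel[of k W M f g C' C Es eps' eps, OF \<open>2 \<le> k\<close> W f01 g tpf eps_C' that]
    by (intro Bochner_Integration.integral_cong) auto
  finally show ?thesis
    unfolding mu_cf_eq_integral by (rule Bochner_Integration.integral_cong[OF refl])
qed

section \<open>Invariance of \<open>\<mu>\<^sub>W\<close>\<close>

lemma bij_betw_PiE_compose:
  assumes h: "bij_betw h I J"
  shows "bij_betw (\<lambda>e. restrict (e \<circ> h) I) (PiE J (\<lambda>_. X)) (PiE I (\<lambda>_. X))"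
proof (rule bij_betwI)
  let ?h' = "the_inv_into I h"
  have h': "?h' j \<in> I" "h (?h' j) = j" if "j \<in> J" for j
    using h that by (auto simp: bij_betw_def intro: the_inv_into_into f_the_inv_into_f)
  have h'_h: "?h' (h i) = i" if "i \<in> I" for i
    using h that by (simp add: bij_betw_def the_inv_into_f_f)
  show "(\<lambda>e. restrict (e \<circ> h) I) \<in> PiE J (\<lambda>_. X) \<rightarrow> PiE I (\<lambda>_. X)"
    using bij_betw_apply[OF h] by auto
  show "(\<lambda>e. restrict (e \<circ> ?h') J) \<in> PiE I (\<lambda>_. X) \<rightarrow> PiE J (\<lambda>_. X)"
    using h' by auto
  show "restrict (restrict (e \<circ> h) I \<circ> ?h') J = e" if "e \<in> PiE J (\<lambda>_. X)" for e
    using that h' by (auto simp: fun_eq_iff PiE_def extensional_def)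
  show "restrict (restrict (e \<circ> ?h') J \<circ> h) I = e" if "e \<in> PiE I (\<lambda>_. X)" for e
    using that h'_h bij_betw_apply[OF h] by (auto simp: fun_eq_iff PiE_def extensional_def)
qed

lemma same_type_Xi_signs_relabel:
  assumes st: "same_type k U Es M a b" and g: "\<And>i. i < length a \<Longrightarrow> g (b ! i) = a ! i"
    and "length is = n" "set is \<subseteq> {..<length a}"
  shows "Xi_signs b (restrict (eps \<circ> image g) (ksub (set b) n)) is = Xi_signs a eps is"
proof -
  have "set (map ((!) b) is) \<in> ksub (set b) n" if "distinct (map ((!) b) is)"
    using that assms(3,4) same_type_length[OF st] distinct_card[OF that] by (auto simp: ksub_def)
  moreover have "g ` set (map ((!) b) is) = set (map ((!) a) is)"
    unfolding set_map image_image using assms(4) g by (intro image_cong) auto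
  ultimately show ?thesis
    using same_type_distinct_map[OF st assms(4)] by (auto simp: Xi_signs_def)
qed

lemma same_type_muW:
  assumes "2 \<le> k" and W: "borel_hypergraphon k W"
    and f01: "\<And>j x. 1 \<le> j \<Longrightarrow> j \<le> k - 1 \<Longrightarrow> x \<in> space (lam M k j) \<Longrightarrow> f j x \<in> {0..1}"
    and Es: "Es \<subseteq> ksub U k" and "wf k \<phi>" and "fv \<phi> \<subseteq> {0..length a}"
    and st: "same_type k U Es M a b"
  shows "muW k U Es M f W \<phi> a = muW k U Es M f W \<phi> b"
proof -
  obtain g where g: "bij_betw g (set b) (set a)" and g_nth: "\<And>i. i < length a \<Longrightarrow> g (b ! i) = a ! i"
    and g_M: "\<And>y. y \<in> set b \<inter> M \<Longrightarrow> g y = y" and g_out: "bij_betw g (set b - M) (set a - M)"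
    and B: "set b \<inter> M = set a \<inter> M"
    using same_type_relabel[OF st] by blast
  define relabel where "relabel eps = restrict (eps \<circ> image g) (ksub (set b) (k - 1))" for eps :: "_ \<Rightarrow> bool"
  define summand where "summand c eps =
    (if finite (Xi_set k U Es (set c) eps - {x\<in>U. sat U Es (inst x c) \<phi>})
     then mu_cf k M Es f W (set c \<inter> M) (set c - M) eps else 0)" for c eps
  have muW_sum: "muW k U Es M f W \<phi> c = (\<Sum>eps\<in>PiE (ksub (set c) (k - 1)) (\<lambda>_. UNIV). summand c eps)" for c
    unfolding muW_def summand_def Let_def by (simp add: Int_Diff_Un)
  have "summand b (relabel eps) = summand a eps" for eps
  proof -
    have "Xi_signs b (relabel eps) is = Xi_signs a eps is"
      if "length is = k - 1" "set is \<subseteq> {..<length a}" for "is"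
      unfolding relabel_def using st g_nth that by (rule same_type_Xi_signs_relabel)
    then have "finite (Xi_set k U Es (set a) eps - {x\<in>U. sat U Es (inst x a) \<phi>}) \<longleftrightarrow>
        finite (Xi_set k U Es (set b) (relabel eps) - {x\<in>U. sat U Es (inst x b) \<phi>})"
      using assms \<open>2 \<le> k\<close> by (intro same_type_finite_Xi_diff[OF st Es]) auto
    moreover have "mu_cf k M Es f W (set a \<inter> M) (set b - M) (relabel eps) = mu_cf k M Es f W (set a \<inter> M) (set a - M) eps"
    proof (rule mu_cf_relabel[OF \<open>2 \<le> k\<close> W f01 _ _ g_out])
      show "\<And>D. D \<subseteq> set b - M \<Longrightarrow> tpf k M Es (g ` D) = tpf k M Es D"
        using same_type_tpf[OF st Es g_nth bij_betw_imp_inj_on[OF g]] by blast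
      have "set a \<inter> M \<union> (set b - M) = set b"
        using B by blast
      then show "\<And>S. S \<in> ksub (set a \<inter> M \<union> (set b - M)) (k - 1) \<Longrightarrow> relabel eps S = eps (g ` S)"
        by (simp add: relabel_def)
    qed (use g_M B in auto)
    ultimately show ?thesis
      unfolding summand_def using B by simp
  qed
  then have "(\<Sum>eps\<in>PiE (ksub (set a) (k - 1)) (\<lambda>_. UNIV). summand a eps)
      = (\<Sum>eps\<in>PiE (ksub (set a) (k - 1)) (\<lambda>_. UNIV). summand b (relabel eps))"
    by simp
  also have "\<dots> = (\<Sum>eps\<in>PiE (ksub (set b) (k - 1)) (\<lambda>_. UNIV). summand b eps)"
    unfolding relabel_def by (rule sum.reindex_bij_betw[OF bij_betw_PiE_compose[OF bij_betw_image_ksub[OF g]]])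
  finally show ?thesis
    unfolding muW_sum .
qed

lemma meas_iso_unitI_range:
  assumes "meas_iso A unitI h h'" "x \<in> space A"
  shows "h x \<in> {0..1}"
proof -
  have "h \<in> measurable A unitI"
    using assms(1) by (simp add: meas_iso_def)
  then have "h x \<in> space unitI"
    using assms(2) by (rule measurable_space)
  then show ?thesis
    by (simp add: unitI_def)
qed

theorem proposition5p14:
  fixes k :: nat and U :: "'u set" and Es :: "'u set set" and M :: "'u set"
    and f :: "nat \<Rightarrow> ('u set \<Rightarrow> bool) \<Rightarrow> real"
    and W :: "(nat set \<Rightarrow> real) \<Rightarrow> real"
  assumes "k > 2"
    and "model_Tk k U Es"
    and "aleph1_saturated k U Es"
    and "countable M" and "elem_sub k U Es M"
    and "\<forall>j. 1 \<le> j \<and> j \<le> k - 1 \<longrightarrow> (\<exists>g. meas_iso (lam M k j) unitI (f j) g)"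
    and "borel_hypergraphon k W"
  shows "\<forall>\<phi> a b. wf k \<phi> \<and> fv \<phi> \<subseteq> {0..length a} \<and> set a \<subseteq> U \<and> set b \<subseteq> U
            \<and> same_type k U Es M a b \<longrightarrow> muW k U Es M f W \<phi> a = muW k U Es M f W \<phi> b"
proof (intro allI impI, elim conjE)
  fix \<phi> and a b :: "'u list"
  assume "wf k \<phi>" "fv \<phi> \<subseteq> {0..length a}" "same_type k U Es M a b"
  have Es: "Es \<subseteq> ksub U k"
    using \<open>model_Tk k U Es\<close> unfolding model_Tk_def by (rule conjunct1)
  have f01: "f j x \<in> {0..1}" if j: "1 \<le> j" "j \<le> k - 1" and x: "x \<in> space (lam M k j)" for j x
  proof -
    obtain g where "meas_iso (lam M k j) unitI (f j) g"
      using assms(6) j by blast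
    then show ?thesis
      using x by (rule meas_iso_unitI_range)
  qed
  have "2 \<le> k"
    using \<open>k > 2\<close> by simp
  then show "muW k U Es M f W \<phi> a = muW k U Es M f W \<phi> b"
    using \<open>borel_hypergraphon k W\<close> f01 Es \<open>wf k \<phi>\<close> \<open>fv \<phi> \<subseteq> {0..length a}\<close> \<open>same_type k U Es M a b\<close>
    by (rule same_type_muW)
qed

end
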